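(* Let $S$ be a finite generating subset of a group $G$ with $1\in S$ and $|S|\ge3$. Assume that either $G$ is infinite or $\alpha_2(S)\le\alpha_{-2}(S)$. Let $H$ be a $2$-atom of $S$ with $1\in H$ and $|\Pi^l(H)|=1$. Then $|H|\le|S|-1$.
   Context: For a group $G$ and $S\subseteq G$, $\mathrm{Cay}(G,S)$ is the graph on $G$ with arcs $(x,y)$, $x^{-1}y\in S$; the image of $X$ is $XS$. For a reflexive locally finite graph $\Gamma=(V,E)$, $\partial(X)=\Gamma(X)\setminus X$; $\Gamma$ is $k$-separable if some finite $X$ has $|X|\ge k$ and $|V\setminus\Gamma(X)|\ge k$; then $\kappa_k(\Gamma)=\min\{|\partial(X)|: X\text{ finite},|X|\ge k,|V\setminus\Gamma(X)|\ge k\}$, a $k$-fragment is such an $X$ attaining the minimum, a $k$-atom is a $k$-fragment of minimum cardinality, $\alpha_k(\Gamma)$ its cardinality. If $\Gamma$ is not $k$-separable and $|V|\ge 2k-1$, by convention $\kappa_k(\Gamma)=|V|-2k+1$ and every $k$-subset is a $k$-fragment and $k$-atom. For $S$ with $1\in S$, these notions for $S$ refer to $\mathrm{Cay}(\langle S\rangle,S)$, and $\alpha_{-k}(S)=\alpha_k(\mathrm{Cay}(\langle S\rangle,S^{-1}))$. $\Pi^l(X)=\{x\in G: xX=X\}$. *)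

theory Defs
  imports "HOL-Algebra.Algebra"
begin

text \<open>A reflexive locally finite graph is given by its vertex set Vs and its
image operator Nb (so Nb Xs = Gamma(Xs)). Boundary: Nb Xs - Xs.\<close>

definition at_least :: "nat \<Rightarrow> 'a set \<Rightarrow> bool" where
  "at_least k A \<longleftrightarrow> infinite A \<or> k \<le> card A"

definition admissible :: "'a set \<Rightarrow> ('a set \<Rightarrow> 'a set) \<Rightarrow> nat \<Rightarrow> 'a set \<Rightarrow> bool" where
  "admissible Vs Nb k Xs \<longleftrightarrow> finite Xs \<and> Xs \<subseteq> Vs \<and> k \<le> card Xs \<and> at_least k (Vs - Nb Xs)"

definition separable :: "'a set \<Rightarrow> ('a set \<Rightarrow> 'a set) \<Rightarrow> nat \<Rightarrow> bool" where
  "separable Vs Nb k \<longleftrightarrow> (\<exists>Xs. admissible Vs Nb k Xs)"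

definition kappa :: "'a set \<Rightarrow> ('a set \<Rightarrow> 'a set) \<Rightarrow> nat \<Rightarrow> nat" where
  "kappa Vs Nb k = (if separable Vs Nb k
     then (LEAST n. \<exists>Xs. admissible Vs Nb k Xs \<and> card (Nb Xs - Xs) = n)
     else card Vs + 1 - 2 * k)"

definition fragment :: "'a set \<Rightarrow> ('a set \<Rightarrow> 'a set) \<Rightarrow> nat \<Rightarrow> 'a set \<Rightarrow> bool" where
  "fragment Vs Nb k Xs \<longleftrightarrow> (if separable Vs Nb k
     then admissible Vs Nb k Xs \<and> card (Nb Xs - Xs) = kappa Vs Nb k
     else finite Vs \<and> 2 * k \<le> card Vs + 1 \<and> Xs \<subseteq> Vs \<and> card Xs = k)"

definition atom :: "'a set \<Rightarrow> ('a set \<Rightarrow> 'a set) \<Rightarrow> nat \<Rightarrow> 'a set \<Rightarrow> bool" where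
  "atom Vs Nb k Xs \<longleftrightarrow> fragment Vs Nb k Xs \<and> (\<forall>Ys. fragment Vs Nb k Ys \<longrightarrow> card Xs \<le> card Ys)"

definition alpha :: "'a set \<Rightarrow> ('a set \<Rightarrow> 'a set) \<Rightarrow> nat \<Rightarrow> nat" where
  "alpha Vs Nb k = (LEAST n. \<exists>Xs. atom Vs Nb k Xs \<and> card Xs = n)"

text \<open>Cayley graph Cay(<S>, S): vertex set generate G S, image of Xs is Xs S.\<close>

definition cay_atom :: "('a, 'b) monoid_scheme \<Rightarrow> 'a set \<Rightarrow> nat \<Rightarrow> 'a set \<Rightarrow> bool" where
  "cay_atom G S k Xs = atom (generate G S) (\<lambda>Ys. Ys <#>\<^bsub>G\<^esub> S) k Xs"

definition alpha_pos :: "('a, 'b) monoid_scheme \<Rightarrow> 'a set \<Rightarrow> nat \<Rightarrow> nat" where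
  "alpha_pos G S k = alpha (generate G S) (\<lambda>Ys. Ys <#>\<^bsub>G\<^esub> S) k"

text \<open>alpha_{-k}(S) = alpha_k(Cay(<S>, S^{-1})); note <S^{-1}> = <S>.\<close>
definition alpha_neg :: "('a, 'b) monoid_scheme \<Rightarrow> 'a set \<Rightarrow> nat \<Rightarrow> nat" where
  "alpha_neg G S k = alpha (generate G (set_inv\<^bsub>G\<^esub> S)) (\<lambda>Ys. Ys <#>\<^bsub>G\<^esub> (set_inv\<^bsub>G\<^esub> S)) k"

definition left_period :: "('a, 'b) monoid_scheme \<Rightarrow> 'a set \<Rightarrow> 'a set" where
  "left_period G Xs = {x \<in> carrier G. x <#\<^bsub>G\<^esub> Xs = Xs}"

end

theory Submission
  imports Defs
begin

(*
  For every h in H there is a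
  generator s in S - {1} with h s^-1 in H, because an atom bigger than k cannot lose a
  point without losing it from its image.  The map h |-> s is injective: if h and h'
  share the generator s, the translates h^-1 H and h'^-1 H are 2-atoms that both contain
  1 and s^-1, so by the intersection property of atoms they coincide, and h h'^-1 is a
  left period of H, i.e. h = h'.  Hence |H| <= |S - {1}| = |S| - 1.
*)

lemma at_least_mono: "A \<subseteq> B \<Longrightarrow> at_least k A \<Longrightarrow> at_least k B"
  unfolding at_least_def by (meson card_mono finite_subset le_trans)

lemma kappa_le_admissible:
  assumes "separable Vs Nb k" "admissible Vs Nb k U"
  shows "kappa Vs Nb k \<le> card (Nb U - U)"
  unfolding kappa_def using assms by (auto intro: Least_le)

lemma kappa_attained:
  assumes "separable Vs Nb k"
  shows "\<exists>U. admissible Vs Nb k U \<and> card (Nb U - U) = kappa Vs Nb k"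
  using assms LeastI_ex[of "\<lambda>n. \<exists>U. admissible Vs Nb k U \<and> card (Nb U - U) = n"]
  unfolding kappa_def separable_def by auto

lemma fragment_iff:
  "separable Vs Nb k \<Longrightarrow> fragment Vs Nb k U \<longleftrightarrow> admissible Vs Nb k U \<and> card (Nb U - U) = kappa Vs Nb k"
  by (simp add: fragment_def)

lemma atom_admissible: "separable Vs Nb k \<Longrightarrow> atom Vs Nb k U \<Longrightarrow> admissible Vs Nb k U"
  by (simp add: atom_def fragment_iff)

(* By convention every k-subset is an atom of a non-separable graph. *)
lemma atom_card_nonseparable: "\<not> separable Vs Nb k \<Longrightarrow> atom Vs Nb k U \<Longrightarrow> card U = k"
  by (simp add: atom_def fragment_def)

lemma alpha_atom:
  assumes "atom Vs Nb k A"
  shows "alpha Vs Nb k = card A"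
  unfolding alpha_def
proof (rule Least_equality)
  show "\<exists>U. atom Vs Nb k U \<and> card U = card A" using assms by blast
next
  fix n assume "\<exists>U. atom Vs Nb k U \<and> card U = n"
  then show "card A \<le> n" using assms by (auto simp: atom_def)
qed

lemma alpha_le_fragment:
  assumes "fragment Vs Nb k U"
  shows "alpha Vs Nb k \<le> card U"
proof -
  define m where "m = (LEAST c. \<exists>Y. fragment Vs Nb k Y \<and> card Y = c)"
  obtain A where A: "fragment Vs Nb k A" "card A = m"
    using LeastI_ex[of "\<lambda>c. \<exists>Y. fragment Vs Nb k Y \<and> card Y = c"] assms unfolding m_def by blast
  have "atom Vs Nb k A" unfolding atom_def using A unfolding m_def by (auto intro: Least_le)
  moreover have "m \<le> card U" unfolding m_def using assms by (auto intro: Least_le)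
  ultimately show ?thesis using A(2) alpha_atom by fastforce
qed

(* An image operator: the neighbourhood map U |-> Gamma(U) of a reflexive locally finite graph. *)
locale image_operator =
  fixes V :: "'a set" and N :: "'a set \<Rightarrow> 'a set"
  assumes extensive: "U \<subseteq> V \<Longrightarrow> U \<subseteq> N U"
    and closed: "U \<subseteq> V \<Longrightarrow> N U \<subseteq> V"
    and finite_image: "finite U \<Longrightarrow> finite (N U)"
    and image_Un: "N (A \<union> B) = N A \<union> N B"
begin

abbreviation boundary :: "'a set \<Rightarrow> 'a set" where
  "boundary U \<equiv> N U - U"

(* Monotonicity is a consequence of additivity. *)
lemma image_mono: "U \<subseteq> W \<Longrightarrow> N U \<subseteq> N W"
  by (metis image_Un sup.absorb2 sup_ge1)

lemma card_image_split:
  assumes "finite U" "U \<subseteq> V"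
  shows "card (N U) = card (boundary U) + card U"
  using card_Diff_subset[OF assms(1) extensive[OF assms(2)]]
    card_mono[OF finite_image[OF assms(1)] extensive[OF assms(2)]] by linarith

(* Submodularity of the boundary function, the engine of the intersection property. *)
lemma boundary_submodular:
  assumes A: "finite A" "A \<subseteq> V" and B: "finite B" "B \<subseteq> V"
  shows "card (boundary (A \<inter> B)) + card (boundary (A \<union> B)) \<le> card (boundary A) + card (boundary B)"
proof -
  have fin: "finite (N A)" "finite (N B)" using A B finite_image by auto
  have "N (A \<inter> B) \<subseteq> N A \<inter> N B" using image_mono[of "A \<inter> B"] by blast
  then have "card (N (A \<inter> B)) \<le> card (N A \<inter> N B)" using fin by (simp add: card_mono)
  moreover have "card (N (A \<union> B)) + card (N A \<inter> N B) = card (N A) + card (N B)"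
    using card_Un_Int[OF fin] image_Un by simp
  moreover have "card (A \<union> B) + card (A \<inter> B) = card A + card B"
    using card_Un_Int[OF A(1) B(1)] by linarith
  moreover have "card (N (A \<inter> B)) = card (boundary (A \<inter> B)) + card (A \<inter> B)"
    and "card (N (A \<union> B)) = card (boundary (A \<union> B)) + card (A \<union> B)"
    using A B by (auto intro!: card_image_split)
  moreover have "card (N A) = card (boundary A) + card A" "card (N B) = card (boundary B) + card B"
    using A B card_image_split by auto
  ultimately show ?thesis by linarith
qed

lemma admissible_Int:
  assumes "admissible V N k A" "k \<le> card (A \<inter> B)"
  shows "admissible V N k (A \<inter> B)"
proof -
  have "V - N A \<subseteq> V - N (A \<inter> B)" using image_mono[of "A \<inter> B" A] by blast
  then show ?thesis using assms at_least_mono unfolding admissible_def by auto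
qed

lemma fragment_Un_boundary:
  assumes sep: "separable V N k" and A: "fragment V N k A" and B: "fragment V N k B"
    and k: "k \<le> card (A \<inter> B)"
  shows "card (boundary (A \<union> B)) \<le> kappa V N k"
proof -
  have aA: "admissible V N k A" and aB: "admissible V N k B"
    and bA: "card (boundary A) = kappa V N k" and bB: "card (boundary B) = kappa V N k"
    using A B fragment_iff[OF sep] by auto
  have "kappa V N k \<le> card (boundary (A \<inter> B))"
    using kappa_le_admissible[OF sep admissible_Int[OF aA k]] .
  moreover have "finite A" "A \<subseteq> V" "finite B" "B \<subseteq> V" using aA aB unfolding admissible_def by auto
  ultimately show ?thesis using boundary_submodular bA bB by fastforce
qed

lemma fragment_Int:
  assumes sep: "separable V N k" and A: "fragment V N k A" and B: "fragment V N k B"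
    and k: "k \<le> card (A \<inter> B)" and far: "at_least k (V - N (A \<union> B))"
  shows "fragment V N k (A \<inter> B)"
proof -
  have aA: "admissible V N k A" and aB: "admissible V N k B"
    and bA: "card (boundary A) = kappa V N k" and bB: "card (boundary B) = kappa V N k"
    using A B fragment_iff[OF sep] by auto
  have fin: "finite A" "A \<subseteq> V" "finite B" "B \<subseteq> V" using aA aB unfolding admissible_def by auto
  then have "card (A \<inter> B) \<le> card (A \<union> B)" by (intro card_mono) auto
  then have "admissible V N k (A \<union> B)" using fin k far unfolding admissible_def by auto
  then have "kappa V N k \<le> card (boundary (A \<union> B))" by (rule kappa_le_admissible[OF sep])
  moreover have aI: "admissible V N k (A \<inter> B)" by (rule admissible_Int[OF aA k])
  then have "kappa V N k \<le> card (boundary (A \<inter> B))" by (rule kappa_le_admissible[OF sep])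
  ultimately have "card (boundary (A \<inter> B)) = kappa V N k"
    using boundary_submodular[OF fin] bA bB by linarith
  then show ?thesis using aI fragment_iff[OF sep] by blast
qed

lemma atom_intersection:
  assumes sep: "separable V N k" and A: "atom V N k A" and B: "atom V N k B"
    and k: "k \<le> card (A \<inter> B)"
    and large: "finite V \<Longrightarrow> 2 * card A + kappa V N k \<le> card V"
  shows "A = B"
proof -
  have fA: "fragment V N k A" and fB: "fragment V N k B" using A B by (simp_all add: atom_def)
  have fin: "finite A" "A \<subseteq> V" "finite B" "B \<subseteq> V"
    using atom_admissible[OF sep A] atom_admissible[OF sep B] unfolding admissible_def by auto
  have far: "at_least k (V - N (A \<union> B))"
  proof (cases "finite V")
    case False
    then show ?thesis using finite_image[of "A \<union> B"] fin
      unfolding at_least_def by (auto dest: Diff_infinite_finite)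
  next
    case True
    have "card A = card B" using A B fA fB by (simp add: atom_def le_antisym)
    moreover have "card (N (A \<union> B)) = card (boundary (A \<union> B)) + card (A \<union> B)"
      using fin by (intro card_image_split) auto
    moreover have "card (A \<union> B) + card (A \<inter> B) = card A + card B"
      using card_Un_Int[of A B] fin by linarith
    moreover have "N (A \<union> B) \<subseteq> V" using fin closed by blast
    then have "card (V - N (A \<union> B)) = card V - card (N (A \<union> B))" "card (N (A \<union> B)) \<le> card V"
      using True by (auto intro: card_Diff_subset finite_subset card_mono)
    ultimately have "k \<le> card (V - N (A \<union> B))"
      using fragment_Un_boundary[OF sep fA fB k] large[OF True] k by linarith
    then show ?thesis unfolding at_least_def by simp
  qed
  have "fragment V N k (A \<inter> B)" by (rule fragment_Int[OF sep fA fB k far])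
  then have "card A \<le> card (A \<inter> B)" "card B \<le> card (A \<inter> B)" using A B by (simp_all add: atom_def)
  then show ?thesis using fin by (metis Int_lower1 Int_lower2 card_seteq)
qed

lemma atom_point_covered:
  assumes sep: "separable V N k" and H: "atom V N k H" and big: "k < card H" and h: "h \<in> H"
  shows "h \<in> N (H - {h})"
proof (rule ccontr)
  assume uncovered: "h \<notin> N (H - {h})"
  have aH: "admissible V N k H" and bH: "card (boundary H) = kappa V N k"
    using H fragment_iff[OF sep] by (auto simp: atom_def)
  have finH: "finite H" "H \<subseteq> V" using aH unfolding admissible_def by auto
  have sub: "N (H - {h}) \<subseteq> N H" by (rule image_mono) blast
  have card_rem: "card (H - {h}) = card H - 1" using h finH by simp
  have aR: "admissible V N k (H - {h})"
    using aH finH big card_rem at_least_mono[of "V - N H" "V - N (H - {h})" k] sub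
    unfolding admissible_def by auto
  have "boundary (H - {h}) \<subseteq> boundary H" using sub uncovered by blast
  then have "card (boundary (H - {h})) \<le> kappa V N k"
    using bH finH finite_image[of H] by (metis card_mono finite_Diff)
  then have "fragment V N k (H - {h})"
    using kappa_le_admissible[OF sep aR] aR fragment_iff[OF sep] by (simp add: le_antisym)
  then have "card H \<le> card (H - {h})" using H by (simp add: atom_def)
  then show False using card_rem big by linarith
qed

end

(* A pair of image operators that are reverse to each other: N U misses W iff U misses N' W.
   For a Cayley graph, N' is the image operator of S^-1. *)
locale dual_image_operators = fwd: image_operator V N + bwd: image_operator V N'
  for V :: "'a set" and N N' :: "'a set \<Rightarrow> 'a set" +
  assumes disjoint_dual: "U \<subseteq> V \<Longrightarrow> W \<subseteq> V \<Longrightarrow> N U \<inter> W = {} \<longleftrightarrow> U \<inter> N' W = {}"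
begin

lemma symmetric: "dual_image_operators V N' N"
  unfolding dual_image_operators_def dual_image_operators_axioms_def
  using fwd.image_operator_axioms bwd.image_operator_axioms disjoint_dual by blast

lemma complement_admissible:
  assumes fin: "finite V" and U: "admissible V N k U"
  shows "admissible V N' k (V - N U)" and "N' (V - N U) - (V - N U) \<subseteq> N U - U"
proof -
  have U': "finite U" "U \<subseteq> V" "k \<le> card U" "k \<le> card (V - N U)"
    using U fin unfolding admissible_def at_least_def by auto
  have miss: "U \<inter> N' (V - N U) = {}" using disjoint_dual[of U "V - N U"] U' by blast
  then have "U \<subseteq> V - N' (V - N U)" using U' by blast
  then have "k \<le> card (V - N' (V - N U))" using U' fin by (meson card_mono finite_Diff le_trans)
  then show "admissible V N' k (V - N U)"
    using fin U' unfolding admissible_def at_least_def by auto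
  show "N' (V - N U) - (V - N U) \<subseteq> N U - U" using miss bwd.closed[of "V - N U"] by blast
qed

lemma kappa_dual_le:
  assumes fin: "finite V" and sep: "separable V N k"
  shows "separable V N' k" and "kappa V N' k \<le> kappa V N k"
proof -
  obtain A where aA: "admissible V N k A" and bA: "card (N A - A) = kappa V N k"
    using kappa_attained[OF sep] by blast
  have a': "admissible V N' k (V - N A)" by (rule complement_admissible(1)[OF fin aA])
  then show sep': "separable V N' k" unfolding separable_def by blast
  have "card (N' (V - N A) - (V - N A)) \<le> card (N A - A)"
    using complement_admissible(2)[OF fin aA] fwd.finite_image aA
    unfolding admissible_def by (meson card_mono finite_Diff)
  then show "kappa V N' k \<le> kappa V N k" using kappa_le_admissible[OF sep' a'] bA by linarith
qed

lemma complement_fragment: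
  assumes fin: "finite V" and sep: "separable V N k" and A: "fragment V N k A"
  shows "fragment V N' k (V - N A)"
proof -
  interpret rev: dual_image_operators V N' N by (rule symmetric)
  have aA: "admissible V N k A" and bA: "card (N A - A) = kappa V N k"
    using A fragment_iff[OF sep] by auto
  have sep': "separable V N' k" by (rule kappa_dual_le(1)[OF fin sep])
  have a': "admissible V N' k (V - N A)" by (rule complement_admissible(1)[OF fin aA])
  have "card (N' (V - N A) - (V - N A)) \<le> card (N A - A)"
    using complement_admissible(2)[OF fin aA] fwd.finite_image aA
    unfolding admissible_def by (meson card_mono finite_Diff)
  also have "\<dots> \<le> kappa V N' k" using bA rev.kappa_dual_le(2)[OF fin sep'] by simp
  finally show ?thesis
    using kappa_le_admissible[OF sep' a'] a' fragment_iff[OF sep'] by (simp add: le_antisym)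
qed

lemma atom_size_bound:
  assumes fin: "finite V" and sep: "separable V N k" and A: "atom V N k A"
    and le: "alpha V N k \<le> alpha V N' k"
  shows "2 * card A + kappa V N k \<le> card V"
proof -
  have fA: "fragment V N k A" using A by (simp add: atom_def)
  have aA: "finite A" "A \<subseteq> V" and bA: "card (N A - A) = kappa V N k"
    using fA fragment_iff[OF sep] unfolding admissible_def by auto
  have "card A \<le> card (V - N A)"
    using le alpha_atom[OF A] alpha_le_fragment[OF complement_fragment[OF fin sep fA]] by linarith
  moreover have "card (V - N A) = card V - card (N A)" "card (N A) \<le> card V"
    using fwd.closed[OF aA(2)] fin by (auto intro: card_Diff_subset finite_subset card_mono)
  moreover have "card (N A) = card (N A - A) + card A" by (rule fwd.card_image_split[OF aA])
  ultimately show ?thesis using bA by linarith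
qed

end

context group
begin

(* S and S^-1 generate the same subgroup, so alpha_{-k} lives on the same vertex set. *)
lemma generate_set_inv:
  assumes "S \<subseteq> carrier G"
  shows "generate G (set_inv S) = generate G S"
proof
  have inv_S: "set_inv S \<subseteq> carrier G" using assms unfolding SET_INV_def by auto
  show "generate G (set_inv S) \<subseteq> generate G S"
    by (rule generate_subgroup_incl[OF _ generate_is_subgroup[OF assms]])
      (auto simp: SET_INV_def intro: generate.inv)
  have "s \<in> generate G (set_inv S)" if "s \<in> S" for s
  proof -
    have "inv (inv s) \<in> generate G (set_inv S)"
      using that by (auto simp: SET_INV_def intro!: generate.inv)
    then show ?thesis using that assms by auto
  qed
  then show "generate G S \<subseteq> generate G (set_inv S)"
    by (intro generate_subgroup_incl[OF _ generate_is_subgroup[OF inv_S]]) blast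
qed

(* Y |-> Y S is the image operator of Cay(G,S); it is extensive because 1 is in S. *)
lemma cayley_image_operator:
  assumes "S \<subseteq> carrier G" "finite S" "\<one> \<in> S"
  shows "image_operator (carrier G) (\<lambda>Y. Y <#> S)"
proof
  fix U assume U: "U \<subseteq> carrier G"
  show "U \<subseteq> U <#> S"
  proof
    fix x assume "x \<in> U"
    then have "x = x \<otimes> \<one>" "x \<in> U" using U by auto
    then show "x \<in> U <#> S" unfolding set_mult_def using assms(3) by blast
  qed
  show "U <#> S \<subseteq> carrier G" by (rule setmult_subset_G[OF U assms(1)])
next
  fix U :: "'a set" assume "finite U"
  then show "finite (U <#> S)" unfolding set_mult_def using assms(2) by auto
next
  fix A B show "(A \<union> B) <#> S = (A <#> S) \<union> (B <#> S)" unfolding set_mult_def by blast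
qed

(* Cay(G,S^-1) is the reverse of Cay(G,S): x s = y iff y s^-1 = x. *)
lemma cayley_dual:
  assumes S: "S \<subseteq> carrier G" "finite S" "\<one> \<in> S"
  shows "dual_image_operators (carrier G) (\<lambda>Y. Y <#> S) (\<lambda>Y. Y <#> set_inv S)"
proof -
  have "set_inv S \<subseteq> carrier G" "finite (set_inv S)" "\<one> \<in> set_inv S"
    using S unfolding SET_INV_def by (auto intro: bexI[of _ \<one>])
  then have ops: "image_operator (carrier G) (\<lambda>Y. Y <#> S)"
    "image_operator (carrier G) (\<lambda>Y. Y <#> set_inv S)"
    using cayley_image_operator S by auto
  have step: "z \<in> Z <#> S \<longleftrightarrow> (\<exists>x\<in>Z. \<exists>s\<in>S. z = x \<otimes> s)" for z Z
    unfolding set_mult_def by blast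
  have step_back: "z \<in> Z <#> set_inv S \<longleftrightarrow> (\<exists>x\<in>Z. \<exists>s\<in>S. z = x \<otimes> inv s)" for z Z
    unfolding set_mult_def SET_INV_def by blast
  have "(U <#> S) \<inter> W = {} \<longleftrightarrow> U \<inter> (W <#> set_inv S) = {}"
    if "U \<subseteq> carrier G" "W \<subseteq> carrier G" for U W
  proof -
    have "x \<otimes> s = y \<longleftrightarrow> x = y \<otimes> inv s" if "x \<in> U" "y \<in> W" "s \<in> S" for x y s
    proof -
      have "x \<in> carrier G" "y \<in> carrier G" "s \<in> carrier G"
        using that \<open>U \<subseteq> carrier G\<close> \<open>W \<subseteq> carrier G\<close> S(1) by auto
      then show ?thesis using inv_solve_right[of x y s] by auto
    qed
    then show ?thesis unfolding disjoint_iff step step_back by metis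
  qed
  then show ?thesis
    using ops by (intro dual_image_operators.intro dual_image_operators_axioms.intro) auto
qed

lemma l_coset_image: "g <# U = (\<lambda>x. g \<otimes> x) ` U"
  unfolding l_coset_def by auto

lemma card_l_coset: "g \<in> carrier G \<Longrightarrow> U \<subseteq> carrier G \<Longrightarrow> card (g <# U) = card U"
  unfolding l_coset_image by (meson card_image inj_on_cmult inj_on_subset)

lemma finite_l_coset_iff: "g \<in> carrier G \<Longrightarrow> U \<subseteq> carrier G \<Longrightarrow> finite (g <# U) \<longleftrightarrow> finite U"
  unfolding l_coset_image by (meson finite_image_iff inj_on_cmult inj_on_subset)

lemma l_coset_Diff:
  "g \<in> carrier G \<Longrightarrow> A \<subseteq> carrier G \<Longrightarrow> B \<subseteq> carrier G \<Longrightarrow> g <# (A - B) = (g <# A) - (g <# B)"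
  unfolding l_coset_image by (rule inj_on_image_set_diff[OF inj_on_cmult]) auto

lemma l_coset_carrier_eq:
  assumes "g \<in> carrier G"
  shows "g <# carrier G = carrier G"
proof
  show "g <# carrier G \<subseteq> carrier G" by (rule l_coset_subset_G[OF subset_refl assms])
  have "x = g \<otimes> (inv g \<otimes> x)" if "x \<in> carrier G" for x
    using that assms by (simp add: m_assoc[symmetric])
  then show "carrier G \<subseteq> g <# carrier G" unfolding l_coset_image using assms by blast
qed

lemma translate_admissible:
  assumes S: "S \<subseteq> carrier G" and g: "g \<in> carrier G"
    and U: "admissible (carrier G) (\<lambda>Y. Y <#> S) k U"
  shows "admissible (carrier G) (\<lambda>Y. Y <#> S) k (g <# U)"
    and "card (((g <# U) <#> S) - (g <# U)) = card ((U <#> S) - U)"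
proof -
  have U': "finite U" "U \<subseteq> carrier G" "k \<le> card U" "at_least k (carrier G - (U <#> S))"
    using U unfolding admissible_def by auto
  have NU: "U <#> S \<subseteq> carrier G" by (rule setmult_subset_G[OF U'(2) S])
  have image: "(g <# U) <#> S = g <# (U <#> S)" by (rule setmult_lcos_assoc[OF U'(2) S g])
  have "carrier G - ((g <# U) <#> S) = g <# (carrier G - (U <#> S))"
    using image l_coset_Diff[OF g subset_refl NU] l_coset_carrier_eq[OF g] by simp
  moreover have "at_least k (g <# (carrier G - (U <#> S)))"
    using U'(4) card_l_coset[OF g] finite_l_coset_iff[OF g] unfolding at_least_def by auto
  ultimately show "admissible (carrier G) (\<lambda>Y. Y <#> S) k (g <# U)"
    using U' card_l_coset[OF g U'(2)] finite_l_coset_iff[OF g U'(2)] l_coset_subset_G[OF U'(2) g]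
    unfolding admissible_def by simp
  have "((g <# U) <#> S) - (g <# U) = g <# ((U <#> S) - U)"
    using image l_coset_Diff[OF g NU U'(2)] by simp
  then show "card (((g <# U) <#> S) - (g <# U)) = card ((U <#> S) - U)"
    using card_l_coset[OF g, of "(U <#> S) - U"] NU by auto
qed

lemma translate_atom:
  assumes S: "S \<subseteq> carrier G" and g: "g \<in> carrier G"
    and sep: "separable (carrier G) (\<lambda>Y. Y <#> S) k"
    and A: "atom (carrier G) (\<lambda>Y. Y <#> S) k A"
  shows "atom (carrier G) (\<lambda>Y. Y <#> S) k (g <# A)"
proof -
  have translate_fragment: "fragment (carrier G) (\<lambda>Y. Y <#> S) k (x <# U)"
    if "x \<in> carrier G" "fragment (carrier G) (\<lambda>Y. Y <#> S) k U" for x U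
  proof -
    have "admissible (carrier G) (\<lambda>Y. Y <#> S) k U"
      and "card ((U <#> S) - U) = kappa (carrier G) (\<lambda>Y. Y <#> S) k"
      using that(2) fragment_iff[OF sep] by auto
    then show ?thesis using translate_admissible[OF S that(1)] fragment_iff[OF sep] by simp
  qed
  have A_sub: "A \<subseteq> carrier G" using atom_admissible[OF sep A] unfolding admissible_def by simp
  have "card (g <# A) \<le> card W" if W: "fragment (carrier G) (\<lambda>Y. Y <#> S) k W" for W
  proof -
    have W_sub: "W \<subseteq> carrier G" using W fragment_iff[OF sep] unfolding admissible_def by simp
    have "card A \<le> card (inv g <# W)" using A translate_fragment[OF _ W] g by (simp add: atom_def)
    then show ?thesis using card_l_coset[OF _ W_sub] card_l_coset[OF g A_sub] g by simp
  qed
  then show ?thesis using translate_fragment[OF g] A unfolding atom_def by simp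
qed

lemma cayley_atom_intersection:
  assumes S: "S \<subseteq> carrier G" "finite S" "\<one> \<in> S" and gen: "generate G S = carrier G"
    and hyp: "infinite (carrier G) \<or> alpha_pos G S k \<le> alpha_neg G S k"
    and sep: "separable (carrier G) (\<lambda>Y. Y <#> S) k"
    and A: "atom (carrier G) (\<lambda>Y. Y <#> S) k A" and B: "atom (carrier G) (\<lambda>Y. Y <#> S) k B"
    and k: "k \<le> card (A \<inter> B)"
  shows "A = B"
proof -
  interpret cay: dual_image_operators "carrier G" "\<lambda>Y. Y <#> S" "\<lambda>Y. Y <#> set_inv S"
    by (rule cayley_dual[OF S])
  have "2 * card A + kappa (carrier G) (\<lambda>Y. Y <#> S) k \<le> card (carrier G)"
    if "finite (carrier G)"
    using cay.atom_size_bound[OF that sep A] hyp that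
    unfolding alpha_pos_def alpha_neg_def generate_set_inv[OF S(1)] gen by simp
  then show ?thesis by (rule cay.fwd.atom_intersection[OF sep A B k])
qed

(* Two points of an atom that step back inside it along the same generator s <> 1 differ
   by a left period: their translates to 1 are atoms sharing 1 and s^-1. *)
lemma shared_generator_period:
  assumes S: "S \<subseteq> carrier G" "finite S" "\<one> \<in> S" and gen: "generate G S = carrier G"
    and hyp: "infinite (carrier G) \<or> alpha_pos G S 2 \<le> alpha_neg G S 2"
    and sep: "separable (carrier G) (\<lambda>Y. Y <#> S) 2"
    and H: "atom (carrier G) (\<lambda>Y. Y <#> S) 2 H"
    and h: "h \<in> H" "h' \<in> H" and s: "s \<in> carrier G" "s \<noteq> \<one>"
    and steps_back: "h \<otimes> inv s \<in> H" "h' \<otimes> inv s \<in> H"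
  shows "h \<otimes> inv h' \<in> left_period G H"
proof -
  have finH: "finite H" "H \<subseteq> carrier G" using atom_admissible[OF sep H] unfolding admissible_def by auto
  have hc: "h \<in> carrier G" "h' \<in> carrier G" using h finH by auto
  define A where "A = inv h <# H"
  define B where "B = inv h' <# H"
  have "inv x \<otimes> x = \<one>" "inv x \<otimes> (x \<otimes> inv s) = inv s" if "x \<in> carrier G" for x
    using that s by (simp_all add: m_assoc[symmetric])
  then have "\<one> \<in> A" "inv s \<in> A" "\<one> \<in> B" "inv s \<in> B"
    unfolding A_def B_def l_coset_image using h steps_back hc by (metis image_eqI)+
  moreover have "inv s \<noteq> \<one>" using s by simp
  moreover have "finite A" unfolding A_def using finH finite_l_coset_iff hc by simp
  ultimately have "card {\<one>, inv s} \<le> card (A \<inter> B)" by (intro card_mono) auto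
  then have two: "2 \<le> card (A \<inter> B)" using \<open>inv s \<noteq> \<one>\<close> by simp
  have "A = B"
    using cayley_atom_intersection[OF S gen hyp sep _ _ two] translate_atom[OF S(1) _ sep H] hc
    unfolding A_def B_def by simp
  have "(h \<otimes> inv h') <# H = h <# B" unfolding B_def using lcos_m_assoc finH hc by simp
  also have "\<dots> = H" unfolding \<open>A = B\<close>[symmetric] A_def
    using lcos_m_assoc lcos_mult_one finH hc by simp
  finally show ?thesis unfolding left_period_def using hc by simp
qed

(* The core estimate: sending each point of H to a generator along which it steps back into H
   is injective when H has trivial left period. *)
lemma atom_card_le_generators:
  assumes S: "S \<subseteq> carrier G" "finite S" "\<one> \<in> S" and gen: "generate G S = carrier G"
    and hyp: "infinite (carrier G) \<or> alpha_pos G S 2 \<le> alpha_neg G S 2"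
    and sep: "separable (carrier G) (\<lambda>Y. Y <#> S) 2"
    and H: "atom (carrier G) (\<lambda>Y. Y <#> S) 2 H" and big: "2 < card H"
    and per: "card (left_period G H) = 1"
  shows "card H \<le> card (S - {\<one>})"
proof -
  interpret cay: image_operator "carrier G" "\<lambda>Y. Y <#> S" by (rule cayley_image_operator[OF S])
  have H_sub: "H \<subseteq> carrier G" using atom_admissible[OF sep H] unfolding admissible_def by auto
  have "\<exists>s \<in> S - {\<one>}. h \<otimes> inv s \<in> H" if h: "h \<in> H" for h
  proof -
    have "h \<in> (H - {h}) <#> S" by (rule cay.atom_point_covered[OF sep H big h])
    then obtain x s where xs: "x \<in> H - {h}" "s \<in> S" "h = x \<otimes> s" unfolding set_mult_def by blast
    then have "x \<in> carrier G" "s \<in> carrier G" using H_sub S(1) by auto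
    then have "h \<otimes> inv s = x" "s \<noteq> \<one>" using xs by (auto simp: m_assoc)
    then show ?thesis using xs by blast
  qed
  then obtain f where f: "\<forall>h \<in> H. f h \<in> S - {\<one>} \<and> h \<otimes> inv (f h) \<in> H" by metis
  have "inj_on f H"
  proof (rule inj_onI)
    fix h h' assume h: "h \<in> H" "h' \<in> H" and same: "f h = f h'"
    then have "f h \<in> carrier G" "f h \<noteq> \<one>" "h \<otimes> inv (f h) \<in> H" "h' \<otimes> inv (f h) \<in> H"
      using f S(1) by auto
    then have "h \<otimes> inv h' \<in> left_period G H" by (rule shared_generator_period[OF S gen hyp sep H h])
    moreover have "\<one> \<in> left_period G H" unfolding left_period_def using lcos_mult_one H_sub by simp
    ultimately have "\<one> = h \<otimes> inv h'" using per by (metis card_1_singletonE singletonD)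
    then show "h = h'" using inv_solve_right h H_sub by (metis l_one subsetD one_closed)
  qed
  then show ?thesis using f S(2) by (intro card_inj_on_le) auto
qed

end

(* Small atoms (in particular all atoms of a non-separable graph, which have exactly two
   elements) satisfy the bound because |S| >= 3; larger atoms are handled by the injection
   into S - {1}. *)
theorem mainTheorem12:
  fixes G :: "('a, 'b) monoid_scheme" and S H :: "'a set"
  assumes "group G"
    and "finite S" and "S \<subseteq> carrier G" and "generate G S = carrier G"
    and "\<one>\<^bsub>G\<^esub> \<in> S" and "card S \<ge> 3"
    and "infinite (carrier G) \<or> alpha_pos G S 2 \<le> alpha_neg G S 2"
    and "cay_atom G S 2 H" and "\<one>\<^bsub>G\<^esub> \<in> H"
    and "card (left_period G H) = 1"
  shows "card H \<le> card S - 1"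
proof -
  interpret group G by fact
  have H: "atom (carrier G) (\<lambda>Y. Y <#>\<^bsub>G\<^esub> S) 2 H"
    using assms(8) unfolding cay_atom_def assms(4) .
  show ?thesis
  proof (cases "separable (carrier G) (\<lambda>Y. Y <#>\<^bsub>G\<^esub> S) 2 \<and> 2 < card H")
    case True
    then have "card H \<le> card (S - {\<one>\<^bsub>G\<^esub>})"
      using atom_card_le_generators[OF assms(3,2,5,4,7) _ H _ assms(10)] by blast
    then show ?thesis using assms(2,5) by simp
  next
    case False
    then have "card H \<le> 2" using atom_card_nonseparable[OF _ H] by fastforce
    then show ?thesis using assms(6) by linarith
  qed
qed

end
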